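(* Let $N\ge 2$, let $\{u_j\}_{j=1}^{N-1}$ and $\{v_j\}_{j=1}^{N-1}$ be sequences of positive real numbers related through $v_j=\frac{1}{u_{N-j}}$ for $j=1,\dots,N-1$, let $H\in\mathbb{R}^{(N-1)\times(N-1)}$ be lower triangular, and let $\tau>0$. Then the following are equivalent: (a) (primal Lyapunov condition) For the algorithm with H-matrix $H$ and the sequence $\{u_j\}$, the quantity $U_N-\tau\|\tilde{A}x_N\|^2-\langle \tilde{A}x_N, x_N-y_0\rangle$, written as a vector quadratic form in $\tilde{A}x_1,\dots,\tilde{A}x_N$, is nonnegative for all values of $\tilde{A}x_1,\dots,\tilde{A}x_N\in\mathbb{R}^d$; i.e. $\tau\|\tilde{A}x_N\|^2+\langle \tilde{A}x_N, x_N-y_0\rangle\le U_N$ holds identically. (b) (dual Lyapunov condition) For the algorithm with H-matrix $H^{\mathrm{A}}$ (the anti-diagonal transpose of $H$, $(H^{\mathrm{A}})_{k,j}=H_{N-j,N-k}$) and the sequence $\{v_j\}$, the quantity $-V_0-\tau\|\tilde{A}x_N\|^2-\langle \tilde{A}x_N, x_N-y_0\rangle$, written as a vector quadratic form in $\tilde{A}x_1,\dots,\tilde{A}x_N$, is nonnegative for all values of $\tilde{A}x_1,\dots,\tilde{A}x_N\in\mathbb{R}^d$; i.e. $V_0\le -\tau\|\tilde{A}x_N\|^2-\langle \tilde{A}x_N, x_N-y_0\rangle$ holds identically.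
   Context: Let $T\colon\mathbb{R}^d\to\mathbb{R}^d$ be nonexpansive and $A=2(I+T)^{-1}-I$ the associated maximally monotone operator, so $T=2J_A-I$ with resolvent $J_A=(I+A)^{-1}$. A fixed-point algorithm with lower-triangular H-matrix $H=(h_{k,j})\in\mathbb{R}^{(N-1)\times(N-1)}$ is $y_{k+1}=y_k-\sum_{j=0}^{k}h_{k+1,j+1}(y_j-Ty_j)$ for $k=0,\dots,N-2$. Set $x_{k+1}=J_A(y_k)$ for $k=0,\dots,N-1$ and $\tilde{A}x_{k+1}=y_k-x_{k+1}\in A x_{k+1}$, so that $y_j-Ty_j=2\tilde{A}x_{j+1}$ and $\|y_{N-1}-Ty_{N-1}\|^2=4\|\tilde{A}x_N\|^2$. Using these relations, all of $x_1,\dots,x_N$, $y_1,\dots,y_{N-1}$ and $x_N-y_0$ are linear combinations of $\tilde{A}x_1,\dots,\tilde{A}x_N$ (and $y_0$ cancels in differences), so the expressions in the claim are vector quadratic forms $\sum_{i,j}s_{i,j}\langle g_i,g_j\rangle$ in $g_k=\tilde{A}x_k$, whose coefficients depend on the H-matrix, the weights, and $\tau$. Primal Lyapunov sequence: $U_1=0$, $U_{j+1}=U_j-u_j\langle x_{j+1}-x_j,\tilde{A}x_{j+1}-\tilde{A}x_j\rangle$ for $j=1,\dots,N-1$. Dual Lyapunov sequence: $V_{N-1}=0$, $V_j=V_{j+1}+v_{j+1}\langle x_N-x_{j+1},\tilde{A}x_N-\tilde{A}x_{j+1}\rangle$ for $j=0,\dots,N-2$. By monotonicity, $U_j$ is nonincreasing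 and $V_j$ is nonincreasing, so either condition yields $\|\tilde{A}x_N\|^2\le \|y_0-y_\star\|^2/\tau^2$ for $y_\star\in\mathrm{Fix}\,T$. *)

theory Defs
  imports "HOL-Analysis.Analysis"
begin

text \<open>H-matrices are 1-indexed functions nat => nat => real; only entries with
  1 <= j <= k <= N-1 matter.  g k stands for the vector (tilde A) x_k, k = 1..N.\<close>

definition lower_tri :: "nat \<Rightarrow> (nat \<Rightarrow> nat \<Rightarrow> real) \<Rightarrow> bool" where
  "lower_tri N H \<longleftrightarrow> (\<forall>k j. 1 \<le> k \<and> k \<le> N - 1 \<and> 1 \<le> j \<and> j \<le> N - 1 \<and> k < j \<longrightarrow> H k j = 0)"

definition antidiag_transpose :: "nat \<Rightarrow> (nat \<Rightarrow> nat \<Rightarrow> real) \<Rightarrow> (nat \<Rightarrow> nat \<Rightarrow> real)" where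
  "antidiag_transpose N H = (\<lambda>k j. H (N - j) (N - k))"

text \<open>y_{k+1} = y_k - sum_{j=0}^k h_{k+1,j+1} (y_j - T y_j), with y_j - T y_j = 2 g_{j+1}.\<close>
primrec yseq :: "(nat \<Rightarrow> nat \<Rightarrow> real) \<Rightarrow> (nat \<Rightarrow> 'a::real_vector) \<Rightarrow> 'a \<Rightarrow> nat \<Rightarrow> 'a" where
  "yseq H g y0 0 = y0"
| "yseq H g y0 (Suc k) = yseq H g y0 k - (\<Sum>j\<le>k. H (Suc k) (Suc j) *\<^sub>R (2 *\<^sub>R g (Suc j)))"

text \<open>x_{k+1} = J_A(y_k) = y_k - (tilde A) x_{k+1}.\<close>
definition xseq :: "(nat \<Rightarrow> nat \<Rightarrow> real) \<Rightarrow> (nat \<Rightarrow> 'a::real_vector) \<Rightarrow> 'a \<Rightarrow> nat \<Rightarrow> 'a" where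
  "xseq H g y0 k = yseq H g y0 (k - 1) - g k"

fun Useq :: "(nat \<Rightarrow> real) \<Rightarrow> (nat \<Rightarrow> 'a::real_inner) \<Rightarrow> (nat \<Rightarrow> 'a) \<Rightarrow> nat \<Rightarrow> real" where
  "Useq u x g 0 = 0"
| "Useq u x g (Suc 0) = 0"
| "Useq u x g (Suc (Suc j)) = Useq u x g (Suc j)
      - u (Suc j) * inner (x (Suc (Suc j)) - x (Suc j)) (g (Suc (Suc j)) - g (Suc j))"

text \<open>Dual Lyapunov sequence, indexed downward: Vrec m = V_{N-1-m}; V_{N-1} = 0,
  V_j = V_{j+1} + v_{j+1} <x_N - x_{j+1}, g_N - g_{j+1}>.\<close>
primrec Vrec :: "nat \<Rightarrow> (nat \<Rightarrow> real) \<Rightarrow> (nat \<Rightarrow> 'a::real_inner) \<Rightarrow> (nat \<Rightarrow> 'a) \<Rightarrow> nat \<Rightarrow> real" where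
  "Vrec N v x g 0 = 0"
| "Vrec N v x g (Suc m) = Vrec N v x g m
      + v (N - 1 - m) * inner (x N - x (N - 1 - m)) (g N - g (N - 1 - m))"

definition Vseq :: "nat \<Rightarrow> (nat \<Rightarrow> real) \<Rightarrow> (nat \<Rightarrow> 'a::real_inner) \<Rightarrow> (nat \<Rightarrow> 'a) \<Rightarrow> nat \<Rightarrow> real" where
  "Vseq N v x g j = Vrec N v x g (N - 1 - j)"

end

(*
  Substituting
  G_j = g_N + (SUM l = 1..N-j. v_l (g_N - g_l)) for 1 <= j <= N-1 and G_N = g_N, an invertible
  change of variables since all v_l are nonzero, turns the dual form for H^A into the primal
  form for H.  Because u_k v_{N-k} = 1, the increments satisfy u_k (G_{k+1} - G_k) = g_{N-k} - g_N:
  the squared terms then agree after reversing the summation index, and the cross terms agree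
  after reflecting the triangle {j <= k} in its anti-diagonal, which is exactly how H^A arises
  from H.
*)

theory Submission
  imports Defs
begin

definition row_comb :: "(nat \<Rightarrow> nat \<Rightarrow> real) \<Rightarrow> (nat \<Rightarrow> 'a::real_vector) \<Rightarrow> nat \<Rightarrow> 'a" where
  "row_comb H g k = (\<Sum>j=1..k. H k j *\<^sub>R g j)"

lemma yseq_Suc_eq: "yseq H g y0 (Suc k) = yseq H g y0 k - 2 *\<^sub>R row_comb H g (Suc k)"
  unfolding row_comb_def One_nat_def sum.atLeast1_atMost_eq lessThan_Suc_atMost
  by (simp add: scaleR_sum_right mult.commute)

lemma yseq_diff:
  "a \<le> b \<Longrightarrow> yseq H g y0 b - yseq H g y0 a = - 2 *\<^sub>R (\<Sum>k=Suc a..b. row_comb H g k)"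
  by (induction b rule: dec_induct) (simp_all add: yseq_Suc_eq algebra_simps del: yseq.simps(2))

lemma xseq_diff:
  "1 \<le> a \<Longrightarrow> a \<le> b \<Longrightarrow>
    xseq H g y0 b - xseq H g y0 a = - 2 *\<^sub>R (\<Sum>k=a..b-1. row_comb H g k) - (g b - g a)"
  using yseq_diff[of "a - 1" "b - 1" H g y0] by (simp add: xseq_def algebra_simps)

lemma xseq_minus_y0: "1 \<le> b \<Longrightarrow> xseq H g y0 b - y0 = - 2 *\<^sub>R (\<Sum>k=1..b-1. row_comb H g k) - g b"
  using yseq_diff[of 0 "b - 1" H g y0] by (simp add: xseq_def algebra_simps)

lemma Useq_Suc_eq_sum:
  "Useq u x g (Suc m) = - (\<Sum>k=1..m. u k * inner (x (Suc k) - x k) (g (Suc k) - g k))"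
  by (induction m) auto

lemma Vrec_eq_sum:
  "M < N \<Longrightarrow> Vrec N v x g M = (\<Sum>m=N-M..N-1. v m * inner (x N - x m) (g N - g m))"
proof (induction M)
  case 0
  then show ?case by simp
next
  case (Suc M)
  then have "{N - Suc M..N - 1} = insert (N - 1 - M) {N - M..N - 1}"
    by auto
  with Suc show ?case by simp
qed

lemma Vseq_0_eq_sum:
  "1 \<le> N \<Longrightarrow> Vseq N v x g 0 = (\<Sum>m=1..N-1. v m * inner (x N - x m) (g N - g m))"
  unfolding Vseq_def by (subst Vrec_eq_sum) auto

lemma sum_triangle_swap:
  "(\<Sum>m=1..(n::nat). \<Sum>i=m..n. f m i) = (\<Sum>i=1..n. \<Sum>m=1..i. f m i :: 'a::comm_monoid_add)"
  by (simp add: sum.Sigma) (rule sum.reindex_bij_witness[where i=prod.swap and j=prod.swap]; auto)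

lemma sum_triangle_reflect:
  "(\<Sum>k=1..n. \<Sum>j=1..k. f k j) = (\<Sum>i=1..n. \<Sum>j=1..i. f (Suc n - j) (Suc n - i) :: 'a::comm_monoid_add)"
  by (simp add: sum.Sigma)
    (rule sum.reindex_bij_witness[where i="\<lambda>(i, j). (Suc n - j, Suc n - i)"
                                    and j="\<lambda>(k, j). (Suc n - j, Suc n - k)"]; auto)

definition primal_residual ::
    "nat \<Rightarrow> (nat \<Rightarrow> real) \<Rightarrow> (nat \<Rightarrow> nat \<Rightarrow> real) \<Rightarrow> real \<Rightarrow> (nat \<Rightarrow> 'a::real_inner) \<Rightarrow> 'a \<Rightarrow> real" where
  "primal_residual N u H \<tau> g y0 =
     Useq u (xseq H g y0) g N - \<tau> * (norm (g N))\<^sup>2 - inner (g N) (xseq H g y0 N - y0)"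

definition dual_residual ::
    "nat \<Rightarrow> (nat \<Rightarrow> real) \<Rightarrow> (nat \<Rightarrow> nat \<Rightarrow> real) \<Rightarrow> real \<Rightarrow> (nat \<Rightarrow> 'a::real_inner) \<Rightarrow> 'a \<Rightarrow> real" where
  "dual_residual N v H \<tau> g y0 =
     - Vseq N v (xseq H g y0) g 0 - \<tau> * (norm (g N))\<^sup>2 - inner (g N) (xseq H g y0 N - y0)"

lemma inner_xseq_minus_y0:
  "1 \<le> N \<Longrightarrow> inner (g N) (xseq H g y0 N - y0)
     = - 2 * inner (\<Sum>k=1..N-1. row_comb H g k) (g N) - (norm (g N))\<^sup>2"
  by (simp add: xseq_minus_y0 inner_diff_right power2_norm_eq_inner inner_commute)

lemma inner_xseq_diff:
  "1 \<le> a \<Longrightarrow> a \<le> b \<Longrightarrow> inner (xseq H g y0 b - xseq H g y0 a) (g b - g a)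
     = - 2 * inner (\<Sum>k=a..b-1. row_comb H g k) (g b - g a) - (norm (g b - g a))\<^sup>2"
  by (simp add: xseq_diff inner_diff_left power2_norm_eq_inner)

lemma primal_residual_eq:
  fixes g :: "nat \<Rightarrow> 'a::real_inner"
  assumes "1 \<le> N"
  shows "primal_residual N u H \<tau> g y0
     = (\<Sum>k=1..N-1. u k * (norm (g (Suc k) - g k))\<^sup>2) + (1 - \<tau>) * (norm (g N))\<^sup>2
       + 2 * (\<Sum>k=1..N-1. inner (row_comb H g k) (u k *\<^sub>R (g (Suc k) - g k) + g N))"
proof -
  let ?x = "xseq H g y0"
  have step: "- (u k * inner (?x (Suc k) - ?x k) (g (Suc k) - g k))
      = u k * (norm (g (Suc k) - g k))\<^sup>2 + 2 * (u k * inner (row_comb H g k) (g (Suc k) - g k))"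
    if "1 \<le> k" for k
    unfolding inner_xseq_diff[OF that le_SucI[OF order_refl]] by (simp add: algebra_simps)
  obtain M where N: "N = Suc M" using assms by (cases N) auto
  have U: "Useq u ?x g N = (\<Sum>k=1..M. u k * (norm (g (Suc k) - g k))\<^sup>2)
      + 2 * (\<Sum>k=1..M. u k * inner (row_comb H g k) (g (Suc k) - g k))"
    unfolding N Useq_Suc_eq_sum sum_negf[symmetric] using step
    by (simp add: sum.distrib sum_distrib_left)
  have cross: "(\<Sum>k=1..M. inner (row_comb H g k) (u k *\<^sub>R (g (Suc k) - g k) + g N))
      = (\<Sum>k=1..M. u k * inner (row_comb H g k) (g (Suc k) - g k))
        + inner (\<Sum>k=1..M. row_comb H g k) (g N)"
    by (simp add: inner_add_right inner_sum_left sum.distrib)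
  show ?thesis
    unfolding primal_residual_def inner_xseq_minus_y0[OF assms]
    unfolding N diff_Suc_1 unfolding N[symmetric] U cross by (simp add: algebra_simps)
qed

lemma dual_residual_eq:
  fixes g :: "nat \<Rightarrow> 'a::real_inner"
  assumes "1 \<le> N"
  shows "dual_residual N v H \<tau> g y0
     = (\<Sum>m=1..N-1. v m * (norm (g N - g m))\<^sup>2) + (1 - \<tau>) * (norm (g N))\<^sup>2
       + 2 * (\<Sum>i=1..N-1. inner (row_comb H g i) (g N + (\<Sum>m=1..i. v m *\<^sub>R (g N - g m))))"
proof -
  let ?x = "xseq H g y0"
  have step: "- (v m * inner (?x N - ?x m) (g N - g m))
      = v m * (norm (g N - g m))\<^sup>2 + 2 * (\<Sum>i=m..N-1. v m * inner (row_comb H g i) (g N - g m))"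
    if "1 \<le> m" "m \<le> N - 1" for m
    using that unfolding inner_xseq_diff[OF that(1) le_trans[OF that(2) diff_le_self]]
    by (simp add: inner_sum_left sum_distrib_left sum_subtractf sum_negf algebra_simps)
  have V: "- Vseq N v ?x g 0 = (\<Sum>m=1..N-1. v m * (norm (g N - g m))\<^sup>2)
      + 2 * (\<Sum>m=1..N-1. \<Sum>i=m..N-1. v m * inner (row_comb H g i) (g N - g m))"
    unfolding Vseq_0_eq_sum[OF assms] sum_negf[symmetric]
    using step by (simp add: sum.distrib sum_distrib_left)
  have cross: "(\<Sum>i=1..N-1. inner (row_comb H g i) (g N + (\<Sum>m=1..i. v m *\<^sub>R (g N - g m))))
      = (\<Sum>m=1..N-1. \<Sum>i=m..N-1. v m * inner (row_comb H g i) (g N - g m))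
        + inner (\<Sum>i=1..N-1. row_comb H g i) (g N)"
    unfolding sum_triangle_swap
    by (simp add: inner_add_right inner_sum_left inner_sum_right sum.distrib)
  show ?thesis
    unfolding dual_residual_def inner_xseq_minus_y0[OF assms] V cross by (simp add: algebra_simps)
qed

definition dual_to_primal :: "nat \<Rightarrow> (nat \<Rightarrow> real) \<Rightarrow> (nat \<Rightarrow> 'a::real_vector) \<Rightarrow> nat \<Rightarrow> 'a" where
  "dual_to_primal N v g j =
     (if 1 \<le> j \<and> j \<le> N - 1 then g N + (\<Sum>l=1..N-j. v l *\<^sub>R (g N - g l)) else g j)"

lemma dual_to_primal_eq:
  "1 \<le> j \<Longrightarrow> j \<le> N \<Longrightarrow> dual_to_primal N v g j = g N + (\<Sum>l=1..N-j. v l *\<^sub>R (g N - g l))"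
  by (cases "j = N") (auto simp: dual_to_primal_def)

lemma dual_to_primal_N: "dual_to_primal N v g N = g N"
  by (simp add: dual_to_primal_def)

lemma dual_to_primal_Suc_diff:
  assumes "1 \<le> k" "k \<le> N - 1"
  shows "dual_to_primal N v g (Suc k) - dual_to_primal N v g k = - v (N - k) *\<^sub>R (g N - g (N - k))"
proof -
  have "N - k = Suc (N - Suc k)"
    using assms by simp
  then show ?thesis
    using assms by (simp add: dual_to_primal_eq)
qed

lemma surj_dual_to_primal:
  assumes "\<forall>m\<in>{1..N-1}. v m \<noteq> 0"
  shows "surj (dual_to_primal N v)"
proof (rule surjI)
  fix G :: "nat \<Rightarrow> 'a"
  define g where "g m = (if 1 \<le> m \<and> m \<le> N - 1
    then G N - (1 / v m) *\<^sub>R (G (N - m) - G (Suc (N - m))) else G m)" for m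
  have g_outside: "g j = G j" if "\<not> (1 \<le> j \<and> j \<le> N - 1)" for j
    using that by (auto simp: g_def)
  have gN: "g N = G N"
    by (rule g_outside) auto
  have telescope: "(\<Sum>l=1..N-j. v l *\<^sub>R (G N - g l)) = G j - G N"
    if "1 \<le> j" "j \<le> N - 1" for j
  proof -
    have "(\<Sum>l=1..N-j. v l *\<^sub>R (G N - g l)) = (\<Sum>l=1..N-j. G (N - l) - G (Suc (N - l)))"
      using that assms by (intro sum.cong) (auto simp: g_def)
    also have "\<dots> = (\<Sum>i=j..<N. G i - G (Suc i))"
      using that
      by (intro sum.reindex_bij_witness[where i="\<lambda>i. N - i" and j="\<lambda>l. N - l"]) auto
    also have "\<dots> = - (\<Sum>i=j..<N. G (Suc i) - G i)"
      by (simp flip: sum_negf)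
    also have "\<dots> = G j - G N"
      using that by (simp add: sum_Suc_diff')
    finally show ?thesis .
  qed
  show "dual_to_primal N v g = G"
  proof
    fix j
    show "dual_to_primal N v g j = G j"
    proof (cases "1 \<le> j \<and> j \<le> N - 1")
      case True
      then show ?thesis
        using telescope[of j] by (simp add: dual_to_primal_def gN)
    next
      case False
      then show ?thesis
        by (auto simp: dual_to_primal_def g_outside)
    qed
  qed
qed

lemma squares_dual_to_primal:
  assumes uv: "\<forall>k\<in>{1..N-1}. u k * v (N - k) = 1"
  shows "(\<Sum>k=1..N-1. u k * (norm (dual_to_primal N v g (Suc k) - dual_to_primal N v g k))\<^sup>2)
       = (\<Sum>m=1..N-1. v m * (norm (g N - g m))\<^sup>2)"
proof -
  have "(\<Sum>k=1..N-1. u k * (norm (dual_to_primal N v g (Suc k) - dual_to_primal N v g k))\<^sup>2)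
      = (\<Sum>k=1..N-1. v (N - k) * (norm (g N - g (N - k)))\<^sup>2)"
  proof (intro sum.cong refl)
    fix k
    assume k: "k \<in> {1..N-1}"
    then have "u k * (norm (dual_to_primal N v g (Suc k) - dual_to_primal N v g k))\<^sup>2
        = (u k * v (N - k)) * v (N - k) * (norm (g N - g (N - k)))\<^sup>2"
      by (simp add: dual_to_primal_Suc_diff power2_eq_square)
    with k uv show "u k * (norm (dual_to_primal N v g (Suc k) - dual_to_primal N v g k))\<^sup>2
        = v (N - k) * (norm (g N - g (N - k)))\<^sup>2"
      by simp
  qed
  also have "\<dots> = (\<Sum>m=1..N-1. v m * (norm (g N - g m))\<^sup>2)"
    by (rule sum.reindex_bij_witness[where i="\<lambda>m. N - m" and j="\<lambda>k. N - k"]) auto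
  finally show ?thesis .
qed

lemma cross_terms_dual_to_primal:
  assumes "1 \<le> N" and uv: "\<forall>k\<in>{1..N-1}. u k * v (N - k) = 1"
  shows "(\<Sum>k=1..N-1. inner (row_comb H (dual_to_primal N v g) k)
            (u k *\<^sub>R (dual_to_primal N v g (Suc k) - dual_to_primal N v g k) + dual_to_primal N v g N))
       = (\<Sum>i=1..N-1. inner (row_comb (antidiag_transpose N H) g i) (g N + (\<Sum>m=1..i. v m *\<^sub>R (g N - g m))))"
proof -
  let ?T = "dual_to_primal N v g"
  have increment: "u k *\<^sub>R (?T (Suc k) - ?T k) + ?T N = g (N - k)" if "1 \<le> k" "k \<le> N - 1" for k
    using that uv by (simp add: dual_to_primal_Suc_diff dual_to_primal_N)
  have "(\<Sum>k=1..N-1. inner (row_comb H ?T k) (u k *\<^sub>R (?T (Suc k) - ?T k) + ?T N))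
      = (\<Sum>k=1..N-1. \<Sum>j=1..k. H k j * inner (?T j) (g (N - k)))"
    by (intro sum.cong refl) (simp add: increment row_comb_def inner_sum_left)
  also have "\<dots> = (\<Sum>i=1..N-1. \<Sum>j=1..i. H (N - j) (N - i) * inner (?T (N - i)) (g (N - (N - j))))"
    using sum_triangle_reflect[of "\<lambda>k j. H k j * inner (?T j) (g (N - k))" "N - 1"] assms(1)
    by simp
  also have "\<dots> = (\<Sum>i=1..N-1. \<Sum>j=1..i. antidiag_transpose N H i j * inner (g j) (?T (N - i)))"
    by (intro sum.cong refl) (auto simp: antidiag_transpose_def inner_commute)
  also have "\<dots> = (\<Sum>i=1..N-1. inner (row_comb (antidiag_transpose N H) g i)
                         (g N + (\<Sum>m=1..i. v m *\<^sub>R (g N - g m))))"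
  proof (intro sum.cong refl)
    fix i
    assume "i \<in> {1..N-1}"
    then have "?T (N - i) = g N + (\<Sum>m=1..i. v m *\<^sub>R (g N - g m))"
      by (subst dual_to_primal_eq) auto
    then show "(\<Sum>j=1..i. antidiag_transpose N H i j * inner (g j) (?T (N - i)))
        = inner (row_comb (antidiag_transpose N H) g i) (g N + (\<Sum>m=1..i. v m *\<^sub>R (g N - g m)))"
      by (simp add: row_comb_def inner_sum_left)
  qed
  finally show ?thesis .
qed

lemma dual_residual_antidiag_transpose:
  fixes g :: "nat \<Rightarrow> 'a::real_inner"
  assumes "1 \<le> N" and "\<forall>k\<in>{1..N-1}. u k * v (N - k) = 1"
  shows "dual_residual N v (antidiag_transpose N H) \<tau> g y0
       = primal_residual N u H \<tau> (dual_to_primal N v g) y0"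
  unfolding primal_residual_eq[OF assms(1)] dual_residual_eq[OF assms(1)]
    squares_dual_to_primal[OF assms(2)] cross_terms_dual_to_primal[OF assms]
  by (simp only: dual_to_primal_N)

theorem theoremD1:
  fixes N :: nat and u v :: "nat \<Rightarrow> real" and H :: "nat \<Rightarrow> nat \<Rightarrow> real" and \<tau> :: real
  assumes "N \<ge> 2"
    and "\<forall>j. 1 \<le> j \<and> j \<le> N - 1 \<longrightarrow> u j > 0"
    and "\<forall>j. 1 \<le> j \<and> j \<le> N - 1 \<longrightarrow> v j > 0"
    and "\<forall>j. 1 \<le> j \<and> j \<le> N - 1 \<longrightarrow> v j = 1 / u (N - j)"
    and "lower_tri N H"
    and "\<tau> > 0"
  shows "(\<forall>(g :: nat \<Rightarrow> 'a::euclidean_space) y0.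
            \<tau> * (norm (g N))\<^sup>2 + inner (g N) (xseq H g y0 N - y0)
              \<le> Useq u (xseq H g y0) g N)
     \<longleftrightarrow>
         (\<forall>(g :: nat \<Rightarrow> 'a) y0.
            Vseq N v (xseq (antidiag_transpose N H) g y0) g 0
              \<le> - \<tau> * (norm (g N))\<^sup>2
                 - inner (g N) (xseq (antidiag_transpose N H) g y0 N - y0))"
proof -
  have uv: "\<forall>k\<in>{1..N-1}. u k * v (N - k) = 1"
  proof
    fix k
    assume k: "k \<in> {1..N-1}"
    then have "1 \<le> N - k" "N - k \<le> N - 1" "N - (N - k) = k"
      by auto
    with assms(4) have "v (N - k) = 1 / u k"
      by metis
    moreover have "u k > 0"
      using assms(2) k by auto
    ultimately show "u k * v (N - k) = 1"
      by simp
  qed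
  have "\<forall>m\<in>{1..N-1}. v m \<noteq> 0"
    using assms(3) by fastforce
  then have "surj (dual_to_primal N v :: (nat \<Rightarrow> 'a) \<Rightarrow> _)"
    by (rule surj_dual_to_primal)
  moreover have "dual_residual N v (antidiag_transpose N H) \<tau> g y0
      = primal_residual N u H \<tau> (dual_to_primal N v g) y0" for g :: "nat \<Rightarrow> 'a" and y0
    using assms(1) uv by (intro dual_residual_antidiag_transpose) auto
  ultimately have "(\<forall>(g :: nat \<Rightarrow> 'a) y0. 0 \<le> primal_residual N u H \<tau> g y0)
      \<longleftrightarrow> (\<forall>(g :: nat \<Rightarrow> 'a) y0. 0 \<le> dual_residual N v (antidiag_transpose N H) \<tau> g y0)"
    by (metis surjD)
  then show ?thesis
    by (simp add: primal_residual_def dual_residual_def algebra_simps)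
qed

end
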